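(* Let $n\ge 2$. The number of distinct diagonals $(F_{0,0},F_{1,1},\dots,F_{2n-3,2n-3})$ occurring among the $\mathbf{F}$-matrices of fully heterochronous ranked tree shapes with $n$ leaves equals the Catalan number $C_{n-1}=\frac1n\binom{2n-2}{n-1}$.
   Context: A fully heterochronous ranked tree shape with $n$ leaves is a rooted full binary tree (every node has out-degree $0$ or $2$), without leaf labels, with $n$ leaves, together with a total ordering of all $2n-1$ nodes (leaves included) such that nodes appear in increasing order along every path from the root to a leaf; the position of a node in this order, numbered $0,\dots,2n-2$, is its rank. Its $\mathbf{F}$-matrix is the $(2n-2)\times(2n-2)$ lower triangular matrix $F$, indices from $0$ to $2n-3$, where for $0\le j\le i$ the entry $F_{i,j}$ is the number of edges from a parent node $v$ to a child node $w$ with rank of $v$ at most $j$ and rank of $w$ larger than $i$. *)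

theory Defs
  imports Complex_Main
begin

text \<open>A fully heterochronous ranked tree shape with n leaves is represented by identifying
  each node with its rank in 0..2n-2; the tree structure is then given by the parent map
  p, where p w is the rank of the parent of the non-root node w (1 \<le> w \<le> 2n-2).
  Rank 0 is the root.\<close>

definition children :: "nat \<Rightarrow> (nat \<Rightarrow> nat) \<Rightarrow> nat \<Rightarrow> nat set" where
  "children n p v = {w. 1 \<le> w \<and> w \<le> 2*n-2 \<and> p w = v}"

definition fh_rts :: "nat \<Rightarrow> (nat \<Rightarrow> nat) \<Rightarrow> bool" where
  "fh_rts n p \<longleftrightarrow>
     (\<forall>w. 1 \<le> w \<and> w \<le> 2*n-2 \<longrightarrow> p w < w) \<and>
     (\<forall>v \<le> 2*n-2. card (children n p v) = 0 \<or> card (children n p v) = 2) \<and>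
     card {v. v \<le> 2*n-2 \<and> children n p v = {}} = n"

definition Fmat :: "nat \<Rightarrow> (nat \<Rightarrow> nat) \<Rightarrow> nat \<Rightarrow> nat \<Rightarrow> nat" where
  "Fmat n p i j = card {w. 1 \<le> w \<and> w \<le> 2*n-2 \<and> p w \<le> j \<and> i < w}"

definition Fdiag :: "nat \<Rightarrow> (nat \<Rightarrow> nat) \<Rightarrow> nat list" where
  "Fdiag n p = map (\<lambda>i. Fmat n p i i) [0..<2*n-2]"

end

theory Submission
  imports Defs
begin

text \<open>Identify node \<open>j\<close> with an up-step if it is internal and a down-step if it is a leaf.
  The diagonal entry \<open>Fmat n p i i\<close> counts the edges crossing the cut between ranks \<open>i\<close> and \<open>i + 1\<close>;
  passing rank \<open>i + 1\<close> closes the edge into that node and opens two new ones if it is internal.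
  Hence the diagonal is the height profile, shifted up by one, of the lattice path of the
  first \<open>2n - 2\<close> nodes, which is a Dyck path since every cut is crossed by at least one edge
  and the last one by exactly one. Conversely every Dyck path arises this way: attach the
  nodes in rank order to the free child slots created so far. The diagonals are therefore in
  bijection with the Dyck paths of semilength \<open>n - 1\<close>, which the reflection principle counts
  by the Catalan number.\<close>

fun dyck_path_from :: "nat \<Rightarrow> bool list \<Rightarrow> bool" where
  "dyck_path_from h [] \<longleftrightarrow> h = 0"
| "dyck_path_from h (up # xs) \<longleftrightarrow>
     (if up then dyck_path_from (Suc h) xs else 0 < h \<and> dyck_path_from (h - 1) xs)"

definition dyck_paths :: "nat \<Rightarrow> nat \<Rightarrow> bool list set" where
  "dyck_paths k h = {xs. length xs = k \<and> dyck_path_from h xs}"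

lemma dyck_path_from_height_le_length: "dyck_path_from h xs \<Longrightarrow> h \<le> length xs"
  by (induction xs arbitrary: h) (fastforce split: if_splits)+

lemma dyck_path_from_length:
  "dyck_path_from h xs \<Longrightarrow> length xs = 2 * length (filter id xs) + h"
  by (induction xs arbitrary: h) (auto split: if_splits)

lemma finite_dyck_paths: "finite (dyck_paths k h)"
proof -
  have "finite {xs :: bool list. set xs \<subseteq> UNIV \<and> length xs = k}"
    by (rule finite_lists_length_eq) simp
  then show ?thesis unfolding dyck_paths_def by (rule rev_finite_subset) auto
qed

lemma card_dyck_paths_straight_down: "card (dyck_paths h h) = 1"
proof -
  have "dyck_paths h h = {replicate h False}"
  proof (induction h)
    case (Suc h)
    have "dyck_paths (Suc h) (Suc h) = Cons False ` dyck_paths h h"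
      using dyck_path_from_height_le_length
      by (fastforce simp: dyck_paths_def length_Suc_conv split: if_splits)
    with Suc show ?case by simp
  qed (auto simp: dyck_paths_def)
  then show ?thesis by simp
qed

lemma card_dyck_paths_Suc:
  "card (dyck_paths (Suc k) h) =
     card (dyck_paths k (Suc h)) + (if 0 < h then card (dyck_paths k (h - 1)) else 0)"
proof -
  let ?down = "if 0 < h then dyck_paths k (h - 1) else {}"
  have "dyck_paths (Suc k) h = Cons True ` dyck_paths k (Suc h) \<union> Cons False ` ?down"
    by (auto simp: dyck_paths_def length_Suc_conv split: if_splits)
  moreover have "card (Cons True ` dyck_paths k (Suc h) \<union> Cons False ` ?down) =
      card (dyck_paths k (Suc h)) + card ?down"
    by (subst card_Un_disjoint) (auto simp: finite_dyck_paths card_image)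
  ultimately show ?thesis by simp
qed

text \<open>The ballot numbers, in the subtraction-free form of the reflection principle.\<close>
lemma card_dyck_paths_reflection:
  "card (dyck_paths (2 * u + h) h) + ((2 * u + h) choose (u + h + 1)) = (2 * u + h) choose u"
proof (induction u arbitrary: h)
  case 0
  show ?case by (simp add: card_dyck_paths_straight_down)
next
  case (Suc u)
  note outer_IH = Suc.IH
  show ?case
  proof (induction h)
    case 0
    have "card (dyck_paths (2 * Suc u) 0) = card (dyck_paths (2 * u + 1) 1)"
      by (simp add: card_dyck_paths_Suc)
    with outer_IH[of 1] show ?case by simp
  next
    case (Suc h)
    have "card (dyck_paths (2 * Suc u + Suc h) (Suc h)) =
        card (dyck_paths (2 * u + Suc (Suc h)) (Suc (Suc h))) + card (dyck_paths (2 * Suc u + h) h)"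
      by (simp add: card_dyck_paths_Suc)
    with outer_IH[of "Suc (Suc h)"] Suc.IH show ?case by simp
  qed
qed

lemma card_dyck_words: "Suc m * card (dyck_paths (2 * m) 0) = (2 * m) choose m"
proof (cases m)
  case (Suc k)
  have reflected: "Suc m * ((2 * m) choose Suc m) = m * ((2 * m) choose m)"
  proof -
    have "2 * m = Suc (m + k)" using Suc by simp
    then show ?thesis using Suc_times_binomial_add[of m k] by (simp only: Suc[symmetric])
  qed
  have "card (dyck_paths (2 * m) 0) + ((2 * m) choose Suc m) = (2 * m) choose m"
    using card_dyck_paths_reflection[of m 0] by simp
  then have "Suc m * card (dyck_paths (2 * m) 0) + Suc m * ((2 * m) choose Suc m) =
      Suc m * ((2 * m) choose m)"
    by (metis add_mult_distrib2)
  with reflected show ?thesis by simp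
qed (simp add: card_dyck_paths_straight_down[of 0])

definition height_step :: "nat \<Rightarrow> bool \<Rightarrow> nat" where
  "height_step h up = (if up then Suc h else h - 1)"

fun heights :: "nat \<Rightarrow> bool list \<Rightarrow> nat list" where
  "heights h [] = []"
| "heights h (up # xs) = height_step h up # heights (height_step h up) xs"

lemma length_heights [simp]: "length (heights h xs) = length xs"
  by (induction xs arbitrary: h) auto

lemma nth_heights: "i < length xs \<Longrightarrow> heights h xs ! i = foldl height_step h (take (Suc i) xs)"
proof (induction xs arbitrary: h i)
  case (Cons up xs)
  then show ?case by (cases i) auto
qed simp

lemma inj_heights: "inj (heights h)"
proof (rule injI)
  show "heights h xs = heights h ys \<Longrightarrow> xs = ys" for xs ys
  proof (induction xs arbitrary: ys h)
    case (Cons x xs)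
    then obtain y ys' where ys: "ys = y # ys'" by (cases ys) auto
    with Cons.prems have "height_step h x = height_step h y" by simp
    then have "x = y" by (auto simp: height_step_def split: if_splits)
    with Cons ys show ?case by auto
  qed (metis length_heights length_0_conv)
qed

lemma dyck_path_from_iff_heights:
  "dyck_path_from h xs \<longleftrightarrow>
     0 \<notin> set (heights (Suc h) xs) \<and> last (Suc h # heights (Suc h) xs) = 1"
proof (induction xs arbitrary: h)
  case (Cons up xs)
  then show ?case by (cases xs; cases h) (auto simp: height_step_def)
qed simp

definition internal_flags :: "nat \<Rightarrow> (nat \<Rightarrow> nat) \<Rightarrow> bool list" where
  "internal_flags n p = map (\<lambda>v. children n p v \<noteq> {}) [0..<2*n-2]"

lemma finite_children: "finite (children n p v)"
  unfolding children_def by (rule finite_subset[of _ "{..2*n-2}"]) auto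

lemma finite_crossing_edges: "finite {w::nat. 1 \<le> w \<and> w \<le> 2*n-2 \<and> p w \<le> j \<and> i < w}"
  by (rule finite_subset[of _ "{..2*n-2}"]) auto

lemma Fmat_diag_0: "Fmat n p 0 0 = card (children n p 0)"
proof -
  have "{w. 1 \<le> w \<and> w \<le> 2*n-2 \<and> p w \<le> 0 \<and> 0 < w} = children n p 0"
    unfolding children_def by auto
  then show ?thesis unfolding Fmat_def by simp
qed

context
  fixes n :: nat and p :: "nat \<Rightarrow> nat"
  assumes parent_less: "\<forall>w. 1 \<le> w \<and> w \<le> 2*n-2 \<longrightarrow> p w < w"
begin

lemma edge_into_Suc_crosses:
  "Suc i \<le> 2*n-2 \<Longrightarrow> Suc i \<in> {w. 1 \<le> w \<and> w \<le> 2*n-2 \<and> p w \<le> i \<and> i < w}"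
  using parent_less[rule_format, of "Suc i"] by simp

lemma Fmat_diag_pos: "i < 2*n-2 \<Longrightarrow> 0 < Fmat n p i i"
  unfolding Fmat_def card_gt_0_iff using edge_into_Suc_crosses[of i] finite_crossing_edges
  by auto

lemma Fmat_diag_last:
  assumes "2*n-2 = Suc m"
  shows "Fmat n p m m = 1"
proof -
  have "p (Suc m) \<le> m" using parent_less[rule_format, of "Suc m"] assms by simp
  then have "{w. 1 \<le> w \<and> w \<le> 2*n-2 \<and> p w \<le> m \<and> m < w} = {Suc m}"
    using assms by auto
  then show ?thesis unfolding Fmat_def by simp
qed

lemma Fmat_diag_Suc:
  assumes "Suc i \<le> 2*n-2"
  shows "Fmat n p (Suc i) (Suc i) = Fmat n p i i - 1 + card (children n p (Suc i))"
proof -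
  let ?E = "\<lambda>i. {w. 1 \<le> w \<and> w \<le> 2*n-2 \<and> p w \<le> i \<and> i < w}"
  have "?E (Suc i) = (?E i - {Suc i}) \<union> children n p (Suc i)"
    unfolding children_def using parent_less by (auto simp: le_Suc_eq)
  moreover have "(?E i - {Suc i}) \<inter> children n p (Suc i) = {}"
    unfolding children_def by auto
  ultimately have "card (?E (Suc i)) = card (?E i - {Suc i}) + card (children n p (Suc i))"
    by (simp add: card_Un_disjoint finite_crossing_edges finite_children)
  also have "card (?E i - {Suc i}) = card (?E i) - 1"
    using edge_into_Suc_crosses[OF assms] finite_crossing_edges by simp
  finally show ?thesis unfolding Fmat_def .
qed

lemma Fdiag_eq_heights:
  assumes binary: "\<forall>v \<le> 2*n-2. card (children n p v) = 0 \<or> card (children n p v) = 2"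
  shows "Fdiag n p = heights 1 (internal_flags n p)"
proof -
  have children_card: "card (children n p v) = (if children n p v = {} then 0 else 2)"
    if "v \<le> 2*n-2" for v
    using binary that finite_children[of n p v] by auto
  have "Fmat n p i i = foldl height_step 1 (map (\<lambda>v. children n p v \<noteq> {}) [0..<Suc i])"
    if "i < 2*n-2" for i
    using that
  proof (induction i)
    case 0
    then show ?case using children_card[of 0] by (simp add: Fmat_diag_0 height_step_def)
  next
    case (Suc i)
    then show ?case
      using Fmat_diag_Suc[of i] Fmat_diag_pos[of i] children_card[of "Suc i"]
      by (simp add: height_step_def)
  qed
  then show ?thesis
    by (intro nth_equalityI) (simp_all add: Fdiag_def internal_flags_def nth_heights take_map)
qed

lemma internal_flags_dyck_path:
  assumes "\<forall>v \<le> 2*n-2. card (children n p v) = 0 \<or> card (children n p v) = 2"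
  shows "internal_flags n p \<in> dyck_paths (2*n-2) 0"
proof -
  have "0 \<notin> set (Fdiag n p)"
    unfolding Fdiag_def by (auto dest!: Fmat_diag_pos)
  moreover have "last (1 # Fdiag n p) = 1"
  proof (cases "2*n-2")
    case (Suc k)
    then have "[0..<2*n-2] = [0..<k] @ [k]" by simp
    then show ?thesis unfolding Fdiag_def using Suc Fmat_diag_last by simp
  qed (simp add: Fdiag_def)
  ultimately show ?thesis
    using dyck_path_from_iff_heights[of 0] Fdiag_eq_heights[OF assms]
    by (simp add: dyck_paths_def internal_flags_def)
qed

end

text \<open>\<open>Q\<close> lists the parents of the free child slots, and the nodes \<open>a, a + 1, \<dots>\<close> take the
  first free slot in turn; node \<open>a + j\<close> opens two new slots iff \<open>j < length t\<close> and \<open>t ! j\<close>.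
  The Dyck condition guarantees a free slot at every step and leaves exactly one for the final
  leaf \<open>a + length t\<close>.\<close>
lemma parent_map_from_dyck_path:
  assumes "dyck_path_from (length Q - 1) t" and "Q \<noteq> []" and "\<forall>v\<in>set Q. v < a"
  shows "\<exists>p. (\<forall>w. a \<le> w \<and> w \<le> a + length t \<longrightarrow> p w < w) \<and>
    (\<forall>v. card {w. a \<le> w \<and> w \<le> a + length t \<and> p w = v} =
      count_list Q v + (if a \<le> v \<and> v < a + length t \<and> t ! (v - a) then 2 else 0))"
  using assms
proof (induction t arbitrary: a Q)
  case Nil
  then obtain q where "Q = [q]" by (cases Q) (auto simp: length_Suc_conv)
  moreover have "{w. a \<le> w \<and> w \<le> a} = {a}" by auto
  ultimately show ?case using Nil.prems(3) by (intro exI[of _ "\<lambda>_. q"]) auto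
next
  case (Cons x t)
  from Cons.prems(2) obtain q0 Q1 where Q: "Q = q0 # Q1" by (cases Q) auto
  define Q' where "Q' = Q1 @ (if x then [a, a] else [])"
  have "dyck_path_from (length Q' - 1) t" and "Q' \<noteq> []"
    using Cons.prems(1) Q unfolding Q'_def by (auto split: if_splits)
  moreover have "\<forall>v\<in>set Q'. v < Suc a" using Cons.prems(3) Q unfolding Q'_def by auto
  ultimately obtain p' where
    below': "\<forall>w. Suc a \<le> w \<and> w \<le> Suc a + length t \<longrightarrow> p' w < w" and
    card': "\<forall>v. card {w. Suc a \<le> w \<and> w \<le> Suc a + length t \<and> p' w = v} =
      count_list Q' v + (if Suc a \<le> v \<and> v < Suc a + length t \<and> t ! (v - Suc a) then 2 else 0)"
    using Cons.IH by blast
  define p where "p = p'(a := q0)"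
  have "\<forall>w. a \<le> w \<and> w \<le> a + length (x # t) \<longrightarrow> p w < w"
    using below' Cons.prems(3) Q unfolding p_def by (auto simp: Suc_le_eq)
  moreover have "card {w. a \<le> w \<and> w \<le> a + length (x # t) \<and> p w = v} =
      count_list Q v + (if a \<le> v \<and> v < a + length (x # t) \<and> (x # t) ! (v - a) then 2 else 0)"
    for v
  proof -
    have "{w. a \<le> w \<and> w \<le> a + length (x # t) \<and> p w = v} =
        (if q0 = v then {a} else {}) \<union> {w. Suc a \<le> w \<and> w \<le> Suc a + length t \<and> p' w = v}"
      unfolding p_def by (auto simp: Suc_le_eq)
    then have "card {w. a \<le> w \<and> w \<le> a + length (x # t) \<and> p w = v} =
        (if q0 = v then 1 else 0) + card {w. Suc a \<le> w \<and> w \<le> Suc a + length t \<and> p' w = v}"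
      by (simp add: card_Un_disjoint)
    also have "\<dots> = (if q0 = v then 1 else 0) + count_list Q1 v + (if x \<and> v = a then 2 else 0)
        + (if Suc a \<le> v \<and> v < Suc a + length t \<and> t ! (v - Suc a) then 2 else 0)"
      using card' unfolding Q'_def by auto
    also have "\<dots> = count_list Q v +
        (if a \<le> v \<and> v < a + length (x # t) \<and> (x # t) ! (v - a) then 2 else 0)"
    proof (cases "v = a")
      case False
      then have "(a \<le> v) = (Suc a \<le> v)" by auto
      moreover have "Suc a \<le> v \<Longrightarrow> (x # t) ! (v - a) = t ! (v - Suc a)"
        by (metis Suc_diff_le diff_Suc_Suc nth_Cons_Suc)
      ultimately show ?thesis using Q False by auto
    qed (use Q in auto)
    finally show ?thesis .
  qed
  ultimately show ?case by blast
qed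

lemma tree_of_dyck_word:
  assumes "s \<in> dyck_paths (2*n-2) 0" and "2 \<le> n"
  obtains p where "\<forall>w. 1 \<le> w \<and> w \<le> 2*n-2 \<longrightarrow> p w < w"
    and "\<And>v. card (children n p v) = (if v < 2*n-2 \<and> s ! v then 2 else 0)"
proof -
  obtain up s1 where s: "s = up # s1"
    using assms by (cases s) (auto simp: dyck_paths_def)
  with assms have up: "up" and s1: "dyck_path_from 1 s1" and len: "1 + length s1 = 2*n-2"
    by (auto simp: dyck_paths_def split: if_splits)
  obtain p where below: "\<forall>w. 1 \<le> w \<and> w \<le> 1 + length s1 \<longrightarrow> p w < w" and
    cards: "\<forall>v. card {w. 1 \<le> w \<and> w \<le> 1 + length s1 \<and> p w = v} =
      count_list [0, 0] v + (if 1 \<le> v \<and> v < 1 + length s1 \<and> s1 ! (v - 1) then 2 else 0)"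
    using parent_map_from_dyck_path[of "[0, 0]" s1 1] s1 by auto
  have "card (children n p v) = (if v < 2*n-2 \<and> s ! v then 2 else 0)" for v
  proof -
    have "children n p v = {w. 1 \<le> w \<and> w \<le> 1 + length s1 \<and> p w = v}"
      unfolding children_def len ..
    then show ?thesis
      using cards[rule_format, of v] len s up by (cases v) auto
  qed
  with below len that show ?thesis by simp
qed

lemma fh_rts_of_dyck_word:
  assumes s: "s \<in> dyck_paths (2*n-2) 0" and "2 \<le> n"
  shows "\<exists>p. fh_rts n p \<and> internal_flags n p = s"
proof -
  obtain p where parent_less: "\<forall>w. 1 \<le> w \<and> w \<le> 2*n-2 \<longrightarrow> p w < w"
    and cards: "\<And>v. card (children n p v) = (if v < 2*n-2 \<and> s ! v then 2 else 0)"
    using tree_of_dyck_word[OF assms] by blast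
  have internal: "children n p v \<noteq> {} \<longleftrightarrow> v < 2*n-2 \<and> s ! v" for v
    using cards[of v] finite_children[of n p v] by (auto split: if_splits)
  have len: "length s = 2*n-2" and ups: "length (filter id s) = n - 1"
    using s dyck_path_from_length[of 0 s] by (auto simp: dyck_paths_def)
  have "card {v. v < 2*n-2 \<and> s ! v} = n - 1"
    using length_filter_conv_card[of id s] len ups by simp
  moreover have "{v. v \<le> 2*n-2 \<and> children n p v = {}} = {..2*n-2} - {v. v < 2*n-2 \<and> s ! v}"
    using internal by auto
  ultimately have "card {v. v \<le> 2*n-2 \<and> children n p v = {}} = n"
    using \<open>2 \<le> n\<close> by (simp add: card_Diff_subset subset_eq)
  then have "fh_rts n p"
    unfolding fh_rts_def using parent_less cards by simp
  moreover have "internal_flags n p = s"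
    unfolding internal_flags_def internal by (intro nth_equalityI) (simp_all add: len)
  ultimately show ?thesis by blast
qed

lemma Fdiags_eq_heights_dyck_words:
  assumes "2 \<le> n"
  shows "{Fdiag n p | p. fh_rts n p} = heights 1 ` dyck_paths (2*n-2) 0"
proof (intro equalityI subsetI)
  fix d assume "d \<in> {Fdiag n p | p. fh_rts n p}"
  then obtain p where d: "d = Fdiag n p" and "fh_rts n p" by blast
  then have parent_less: "\<forall>w. 1 \<le> w \<and> w \<le> 2*n-2 \<longrightarrow> p w < w"
    and binary: "\<forall>v \<le> 2*n-2. card (children n p v) = 0 \<or> card (children n p v) = 2"
    unfolding fh_rts_def by auto
  show "d \<in> heights 1 ` dyck_paths (2*n-2) 0"
    unfolding d Fdiag_eq_heights[OF parent_less binary]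
    using internal_flags_dyck_path[OF parent_less binary] by (rule imageI)
next
  fix d assume "d \<in> heights 1 ` dyck_paths (2*n-2) 0"
  then obtain s where d: "d = heights 1 s" and s: "s \<in> dyck_paths (2*n-2) 0" by blast
  then obtain p where fh: "fh_rts n p" and flags: "internal_flags n p = s"
    using fh_rts_of_dyck_word[OF s assms] by blast
  from fh have "Fdiag n p = heights 1 (internal_flags n p)"
    unfolding fh_rts_def by (intro Fdiag_eq_heights) auto
  with flags have "Fdiag n p = d" unfolding d by simp
  with fh show "d \<in> {Fdiag n p | p. fh_rts n p}" by blast
qed

theorem proposition3:
  fixes n :: nat
  assumes "n \<ge> 2"
  shows "real (card {Fdiag n p | p. fh_rts n p}) = (1 / real n) * real ((2*n-2) choose (n-1))"
proof -
  have n: "Suc (n-1) = n" "2*(n-1) = 2*n-2" using assms by auto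
  have "n * card {Fdiag n p | p. fh_rts n p} = (2*n-2) choose (n-1)"
    using card_dyck_words[of "n-1"]
    unfolding n Fdiags_eq_heights_dyck_words[OF assms]
      card_image[OF inj_on_subset[OF inj_heights subset_UNIV]] .
  then have "real n * real (card {Fdiag n p | p. fh_rts n p}) = real ((2*n-2) choose (n-1))"
    unfolding of_nat_mult[symmetric] by (rule arg_cong)
  with assms show ?thesis by (simp add: eq_divide_eq mult.commute)
qed

end
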